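(* Let $\sigma$ be a completely erasing $k$-block substitution that satisfies the optimality condition. Let $w\in\{0,1\}^*$, $h\in\mathbb N$ and $p=\sigma^h(w)\in\{0,1\}^*$. Then for every $u\in\{0,1\}^\omega$ there is $v\in\{0,1\}^\omega$ such that $\sigma^h(wv)=pu$.
   Context: Binary words: $\{0,1\}^*$ and $\{0,1\}^\omega$ denote finite and infinite binary words, and $\epsilon$ is the empty word. Fix $k\ge2$. An erasing $k$-block substitution is a map $\sigma:\{0,1\}^k\to\{0,1\}^*$ with exactly one block $w_\epsilon$ such that $\sigma(w_\epsilon)=\epsilon$. $\sigma$ is alternating if there are $\sigma_1,\dots,\sigma_k:\{0,1\}\to\{0,1\}^*$ with $\sigma(b_1\cdots b_k)=\sigma_1(b_1)\cdots\sigma_k(b_k)$. It is then extended to all finite or infinite words by $\sigma(u)=\prod_j\sigma_{((j-1)\bmod k)+1}(u_j)$, and iterates $\sigma^h$ are computed with this extension. $\sigma$ is completely erasing if it is erasing and alternating, and every $w\in\{0,1\}^*$ satisfies $\sigma^n(w)=\epsilon$ for some $n\in\mathbb N$. Optimality condition: every $w\in\{0,1\}^\omega$ can be written as $w=\prod_{i\ge1}\sigma(b_i)$ with blocks $b_i\in\{0,1\}^k$ satisfying $\sigma(b_i)\ne\epsilon$. *)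

theory Defs
  imports Main
begin

(* An alternating k-block substitution is given by sig :: nat => bool => bool list,
   where sig i (0-based, i < k) is sigma_{i+1}. *)

definition blk_app :: "(nat \<Rightarrow> bool \<Rightarrow> bool list) \<Rightarrow> nat \<Rightarrow> bool list \<Rightarrow> bool list" where
  "blk_app sig k u = concat (map (\<lambda>j. sig (j mod k) (u ! j)) [0..<length u])"

type_synonym word = "bool list + (nat \<Rightarrow> bool)"

definition cat_inf :: "bool list \<Rightarrow> (nat \<Rightarrow> bool) \<Rightarrow> (nat \<Rightarrow> bool)" where
  "cat_inf w v = (\<lambda>i. if i < length w then w ! i else v (i - length w))"

(* image of an infinite word: the infinite product of the images of its letters,
   which is an infinite word if the partial images are unbounded in length, and
   otherwise the (eventually constant) finite partial image *)
definition omega_app :: "(nat \<Rightarrow> bool \<Rightarrow> bool list) \<Rightarrow> nat \<Rightarrow> (nat \<Rightarrow> bool) \<Rightarrow> word" where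
  "omega_app sig k x =
     (let pre = (\<lambda>n. blk_app sig k (map x [0..<n])) in
      if (\<forall>L. \<exists>n. L < length (pre n))
      then Inr (\<lambda>i. pre (LEAST n. i < length (pre n)) ! i)
      else Inl (pre (LEAST n. \<forall>m\<ge>n. pre m = pre n)))"

definition word_app :: "(nat \<Rightarrow> bool \<Rightarrow> bool list) \<Rightarrow> nat \<Rightarrow> word \<Rightarrow> word" where
  "word_app sig k z = (case z of Inl u \<Rightarrow> Inl (blk_app sig k u) | Inr x \<Rightarrow> omega_app sig k x)"

definition erasing :: "(nat \<Rightarrow> bool \<Rightarrow> bool list) \<Rightarrow> nat \<Rightarrow> bool" where
  "erasing sig k \<longleftrightarrow> (\<exists>!b. length b = k \<and> blk_app sig k b = [])"

definition completely_erasing :: "(nat \<Rightarrow> bool \<Rightarrow> bool list) \<Rightarrow> nat \<Rightarrow> bool" where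
  "completely_erasing sig k \<longleftrightarrow> erasing sig k \<and>
     (\<forall>w. \<exists>n. (blk_app sig k ^^ n) w = [])"

definition optimal :: "(nat \<Rightarrow> bool \<Rightarrow> bool list) \<Rightarrow> nat \<Rightarrow> bool" where
  "optimal sig k \<longleftrightarrow> (\<forall>w :: nat \<Rightarrow> bool. \<exists>b :: nat \<Rightarrow> bool list.
      (\<forall>i. length (b i) = k \<and> blk_app sig k (b i) \<noteq> []) \<and>
      (\<forall>n. let q = concat (map (\<lambda>i. blk_app sig k (b i)) [0..<n])
           in q = map w [0..<length q]))"

end

theory Submission imports Defs begin

(* Optimality says that sigma maps some infinite word onto any prescribed infinite word u:
   concatenate the blocks b_1, b_2, ... with sigma(b_1) sigma(b_2) ... = u.  Given the finite
   word p = sigma^h(w), pad p by letters of the erased block (in the right phase) up to a length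
   divisible by k; the padding is erased, so sigma maps the padded p followed by such a preimage
   of u onto sigma(p) u.  Induction on h then pulls any infinite continuation of sigma^h(w) back
   to one of w. *)

definition inf_prefix :: "'a list \<Rightarrow> (nat \<Rightarrow> 'a) \<Rightarrow> bool" where
  "inf_prefix xs z \<longleftrightarrow> map z [0..<length xs] = xs"

lemma inf_prefix_iff_nth: "inf_prefix xs z \<longleftrightarrow> (\<forall>i < length xs. z i = xs ! i)"
  unfolding inf_prefix_def list_eq_iff_nth_eq by simp

lemma inf_prefix_take: "inf_prefix xs z \<Longrightarrow> inf_prefix (take n xs) z"
  by (simp add: inf_prefix_iff_nth)

lemma cat_inf_append: "cat_inf (p @ q) x = cat_inf p (cat_inf q x)"
  by (auto simp: cat_inf_def nth_append)

lemma map_cat_inf_upt: "map (cat_inf q x) [0..<length q + n] = q @ map x [0..<n]"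
  by (rule nth_equalityI) (auto simp: cat_inf_def nth_append)

lemma inf_prefix_append_cat_inf: "inf_prefix (q @ xs) (cat_inf q z) \<longleftrightarrow> inf_prefix xs z"
  unfolding inf_prefix_def by (simp add: map_cat_inf_upt)

lemma blk_app_append:
  "blk_app sig k (xs @ ys) =
     blk_app sig k xs @ concat (map (\<lambda>j. sig ((length xs + j) mod k) (ys ! j)) [0..<length ys])"
proof -
  have tail: "map (\<lambda>j. sig (j mod k) ((xs @ ys) ! j)) [length xs..<length xs + length ys]
        = map (\<lambda>j. sig ((length xs + j) mod k) (ys ! j)) [0..<length ys]"
    by (rule nth_equalityI) (auto simp: nth_append)
  have head: "map (\<lambda>j. sig (j mod k) ((xs @ ys) ! j)) [0..<length xs]
        = map (\<lambda>j. sig (j mod k) (xs ! j)) [0..<length xs]"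
    by (intro map_cong) (auto simp: nth_append)
  show ?thesis
    unfolding blk_app_def length_append upt_add_eq_append[OF le0] map_append concat_append
      head tail ..
qed

lemma blk_app_append_dvd:
  assumes "k dvd length xs"
  shows "blk_app sig k (xs @ ys) = blk_app sig k xs @ blk_app sig k ys"
  using assms unfolding blk_app_append by (simp add: blk_app_def mod_add_left_eq[symmetric])

lemma blk_app_take:
  "blk_app sig k (take n xs) = take (length (blk_app sig k (take n xs))) (blk_app sig k xs)"
  using blk_app_append[of sig k "take n xs" "drop n xs"] by simp

definition image_prefix ::
  "(nat \<Rightarrow> bool \<Rightarrow> bool list) \<Rightarrow> nat \<Rightarrow> (nat \<Rightarrow> bool) \<Rightarrow> nat \<Rightarrow> bool list" where
  "image_prefix sig k x n = blk_app sig k (map x [0..<n])"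

lemma image_prefix_mono:
  assumes "n \<le> m"
  shows "image_prefix sig k x n = take (length (image_prefix sig k x n)) (image_prefix sig k x m)"
proof -
  have "map x [0..<n] = take n (map x [0..<m])"
    using assms by (simp add: take_map)
  then show ?thesis unfolding image_prefix_def by (metis blk_app_take)
qed

lemma inf_prefix_image_prefix_mono:
  "inf_prefix (image_prefix sig k x m) z \<Longrightarrow> n \<le> m \<Longrightarrow> inf_prefix (image_prefix sig k x n) z"
  by (metis image_prefix_mono inf_prefix_take)

lemma omega_app_eq_Inr_iff:
  "omega_app sig k x = Inr z \<longleftrightarrow>
     (\<forall>L. \<exists>n. L < length (image_prefix sig k x n)) \<and> (\<forall>n. inf_prefix (image_prefix sig k x n) z)"
  (is "_ \<longleftrightarrow> ?unbounded \<and> _")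
proof -
  let ?pre = "image_prefix sig k x"
  define lim where "lim i = ?pre (LEAST n. i < length (?pre n)) ! i" for i
  have omega: "omega_app sig k x =
      (if ?unbounded then Inr lim else Inl (?pre (LEAST n. \<forall>m\<ge>n. ?pre m = ?pre n)))"
    unfolding omega_app_def image_prefix_def lim_def Let_def ..
  have lim_prefix: "inf_prefix (?pre n) lim" if ?unbounded for n
    unfolding inf_prefix_iff_nth
  proof (intro allI impI)
    fix i assume i: "i < length (?pre n)"
    define m where "m = (LEAST n. i < length (?pre n))"
    have "i < length (?pre m)" unfolding m_def using i by (rule LeastI)
    moreover have "m \<le> n" unfolding m_def using i by (rule Least_le)
    ultimately have "?pre m ! i = ?pre n ! i"
      by (metis image_prefix_mono nth_take)
    then show "lim i = ?pre n ! i" by (simp add: lim_def m_def)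
  qed
  moreover have "lim = z" if unbounded: ?unbounded and prefix: "\<forall>n. inf_prefix (?pre n) z"
  proof
    fix i
    obtain n where "i < length (?pre n)" using unbounded by blast
    then show "lim i = z i"
      using prefix lim_prefix[OF unbounded] by (simp add: inf_prefix_iff_nth)
  qed
  ultimately show ?thesis unfolding omega by auto
qed

lemma omega_app_surj:
  assumes "0 < k" and "optimal sig k"
  shows "\<exists>x. omega_app sig k x = Inr u"
proof -
  obtain b where b: "\<And>i. length (b i) = k" "\<And>i. blk_app sig k (b i) \<noteq> []"
    and pref: "\<And>M. inf_prefix (concat (map (\<lambda>i. blk_app sig k (b i)) [0..<M])) u"
    using assms(2) unfolding optimal_def inf_prefix_def Let_def by metis
  define x where "x n = b (n div k) ! (n mod k)" for n
  define Q where "Q M = concat (map (\<lambda>i. blk_app sig k (b i)) [0..<M])" for M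
  have blocks: "map x [0..<k * M] = concat (map b [0..<M])" for M
  proof (induction M)
    case (Suc M)
    have "map x [k * M..<k * M + k] = b M"
      by (rule nth_equalityI) (use assms(1) b(1) in \<open>auto simp: x_def\<close>)
    moreover have "[0..<k * Suc M] = [0..<k * M] @ [k * M..<k * M + k]"
      by (simp only: mult_Suc_right add.commute[of k "k * M"] upt_add_eq_append[OF le0])
    ultimately show ?case
      using Suc.IH by simp
  qed simp
  have image_blocks: "image_prefix sig k x (k * M) = Q M" for M
  proof (induction M)
    case (Suc M)
    have "k dvd length (concat (map b [0..<M]))"
      by (simp add: length_concat comp_def b(1) sum_list_triv)
    then show ?case
      using Suc.IH unfolding image_prefix_def blocks by (simp add: Q_def blk_app_append_dvd)
  qed (simp add: image_prefix_def Q_def blk_app_def)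
  have "M \<le> length (Q M)" for M
  proof (induction M)
    case (Suc M)
    have "0 < length (blk_app sig k (b M))" using b(2) by simp
    then show ?case using Suc.IH by (simp add: Q_def del: length_greater_0_conv)
  qed simp
  then have "\<exists>n. L < length (image_prefix sig k x n)" for L
    by (metis image_blocks Suc_le_eq)
  moreover have "inf_prefix (image_prefix sig k x n) u" for n
  proof (rule inf_prefix_image_prefix_mono)
    show "inf_prefix (image_prefix sig k x (k * n)) u"
      using pref by (simp add: image_blocks Q_def)
    show "n \<le> k * n" using assms(1) by simp
  qed
  ultimately show ?thesis using omega_app_eq_Inr_iff by blast
qed

lemma omega_app_cat_inf:
  assumes "k dvd length q" and "omega_app sig k x = Inr z"
  shows "omega_app sig k (cat_inf q x) = Inr (cat_inf (blk_app sig k q) z)"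
proof -
  have shift: "image_prefix sig k (cat_inf q x) (length q + n) =
      blk_app sig k q @ image_prefix sig k x n" for n
    using assms(1) by (simp add: image_prefix_def map_cat_inf_upt blk_app_append_dvd)
  have unbounded: "\<forall>L. \<exists>n. L < length (image_prefix sig k x n)"
    and pref: "\<And>n. inf_prefix (image_prefix sig k x n) z"
    using assms(2) omega_app_eq_Inr_iff by blast+
  have "\<exists>n. L < length (image_prefix sig k (cat_inf q x) n)" for L
    using unbounded by (metis shift length_append trans_less_add2)
  moreover have "inf_prefix (image_prefix sig k (cat_inf q x) n) (cat_inf (blk_app sig k q) z)" for n
    using inf_prefix_image_prefix_mono[of sig k "cat_inf q x" "length q + n"]
    by (simp add: shift inf_prefix_append_cat_inf pref)
  ultimately show ?thesis using omega_app_eq_Inr_iff by blast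
qed

lemma erasing_padding:
  assumes "0 < k" and "length e = k" and "blk_app sig k e = []"
  shows "\<exists>pad. k dvd length (p @ pad) \<and> blk_app sig k (p @ pad) = blk_app sig k p"
proof -
  have erased: "sig (j mod k) (e ! (j mod k)) = []" for j
    using assms by (simp add: blk_app_def concat_eq_Nil_conv)
  define pad where "pad = map (\<lambda>j. e ! ((length p + j) mod k)) [0..<(k - 1) * length p]"
  have "length (p @ pad) = k * length p"
    using assms(1) by (simp add: pad_def algebra_simps)
  moreover have "blk_app sig k (p @ pad) = blk_app sig k p"
    by (simp add: blk_app_append pad_def erased concat_eq_Nil_conv)
  ultimately show ?thesis by (intro exI[of _ pad]) simp
qed

lemma omega_app_continuation:
  assumes "0 < k" and "optimal sig k" and "length e = k" and "blk_app sig k e = []"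
  shows "\<exists>v. omega_app sig k (cat_inf p v) = Inr (cat_inf (blk_app sig k p) u)"
proof -
  obtain pad where "k dvd length (p @ pad)" and "blk_app sig k (p @ pad) = blk_app sig k p"
    using erasing_padding assms(1,3,4) by blast
  moreover obtain x where "omega_app sig k x = Inr u"
    using omega_app_surj assms(1,2) by blast
  ultimately have "omega_app sig k (cat_inf p (cat_inf pad x)) = Inr (cat_inf (blk_app sig k p) u)"
    by (metis omega_app_cat_inf cat_inf_append)
  then show ?thesis by blast
qed

lemma word_app_iter_continuation:
  assumes "0 < k" and "optimal sig k" and "length e = k" and "blk_app sig k e = []"
  shows "\<exists>v. (word_app sig k ^^ h) (Inr (cat_inf w v)) = Inr (cat_inf ((blk_app sig k ^^ h) w) u)"
proof (induction h arbitrary: u)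
  case (Suc h)
  obtain u' where u': "omega_app sig k (cat_inf ((blk_app sig k ^^ h) w) u') =
                       Inr (cat_inf ((blk_app sig k ^^ Suc h) w) u)"
    using omega_app_continuation[OF assms] by auto
  obtain v where "(word_app sig k ^^ h) (Inr (cat_inf w v)) = Inr (cat_inf ((blk_app sig k ^^ h) w) u')"
    using Suc.IH by blast
  then have "(word_app sig k ^^ Suc h) (Inr (cat_inf w v)) = Inr (cat_inf ((blk_app sig k ^^ Suc h) w) u)"
    using u' by (simp add: word_app_def)
  then show ?case by blast
qed auto

theorem lemma4p5:
  fixes sig :: "nat \<Rightarrow> bool \<Rightarrow> bool list" and k h :: nat and w p :: "bool list"
  assumes "k \<ge> 2"
    and "completely_erasing sig k"
    and "optimal sig k"
    and "p = (blk_app sig k ^^ h) w"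
  shows "\<forall>u :: nat \<Rightarrow> bool. \<exists>v :: nat \<Rightarrow> bool.
           (word_app sig k ^^ h) (Inr (cat_inf w v)) = Inr (cat_inf p u)"
proof -
  obtain e where "length e = k" "blk_app sig k e = []"
    using assms(2) unfolding completely_erasing_def erasing_def by blast
  then show ?thesis
    using word_app_iter_continuation[of k sig e] assms(1,3,4) by simp
qed

end
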